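(* Let $k\ge3$. Then $$J_{-1}E\equiv \beta\, L(-2)^2E \pmod{C_2(V_L^+)},\qquad \beta=\frac{64k^2-16k-18}{(4k-1)(4k-9)}.$$
   Context: $L=\mathbb{Z}\alpha$, $\langle\alpha,\alpha\rangle=2k$; $V_L=M(1)\otimes\mathbb{C}[L]$ the lattice VOA with conformal vector $\omega=\frac1{4k}\alpha(-1)^2\mathbf1$, $L(n)=\omega_{n+1}$; $V_L^+$ the fixed points of the involution $\theta$ lifted from $-1$ on $L$; $E=e^{\alpha}+e^{-\alpha}$; $J=\frac{1}{4k^2}\alpha(-1)^4\mathbf1-\frac1k\alpha(-3)\alpha(-1)\mathbf1+\frac{3}{4k}\alpha(-2)^2\mathbf1$ and $J_{-1}$ is its $(-1)$-mode. $C_2(V)$ is the span of $\{v_{-2}u:u,v\in V\}$. *)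

theory Defs
  imports Complex_Main "HOL-Library.Multiset" "HOL-Library.Function_Algebras"
begin

text \<open>Concrete model of the rank-one lattice VOA V_L, L = Z alpha, <alpha,alpha> = 2k.
  Basis of V_L = M(1) (x) C[L]: a key (M, a) stands for the monomial
  alpha(-n1) ... alpha(-nr) e^(a alpha), where M = {#n1,...,nr#} (all ni >= 1).
  The 2-cocycle is trivial (valid since L is even of rank one).\<close>

type_synonym key = "nat multiset \<times> int"
type_synonym vec = "key \<Rightarrow> complex"

definition single :: "key \<Rightarrow> vec" where
  "single x = (\<lambda>y. if y = x then 1 else 0)"

definition smul :: "complex \<Rightarrow> vec \<Rightarrow> vec" where
  "smul c f = (\<lambda>y. c * f y)"

definition supp :: "vec \<Rightarrow> key set" where
  "supp f = {x. f x \<noteq> 0}"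

definition lin :: "(key \<Rightarrow> vec) \<Rightarrow> vec \<Rightarrow> vec" where
  "lin T f = (\<Sum>x\<in>supp f. smul (f x) (T x))"

definition fsum :: "(nat \<Rightarrow> vec) \<Rightarrow> vec" where
  "fsum g = (\<Sum>i\<in>{i. g i \<noteq> 0}. g i)"

text \<open>Heisenberg operators alpha(m): [alpha(m),alpha(n)] = 2k m delta_{m+n,0},
  alpha(0) e^(b alpha) = 2kb e^(b alpha)\<close>
definition heis_basis :: "nat \<Rightarrow> int \<Rightarrow> key \<Rightarrow> vec" where
  "heis_basis k m x = (case x of (M, b) \<Rightarrow>
     if m < 0 then single (add_mset (nat (- m)) M, b)
     else if m = 0 then smul (of_int (2 * int k * b)) (single (M, b))
     else smul (of_int (2 * int k * m * int (count M (nat m)))) (single (M - {#nat m#}, b)))"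

definition heis :: "nat \<Rightarrow> int \<Rightarrow> vec \<Rightarrow> vec" where
  "heis k m = lin (heis_basis k m)"

text \<open>partitions of s, and the coefficient prod_n (c/n)^(c_n) / c_n! of exp(sum_n c X_n / n)\<close>
definition parts :: "nat \<Rightarrow> nat multiset set" where
  "parts s = {p. (\<forall>n\<in>#p. 0 < n) \<and> sum_mset p = s}"

definition pcoeff :: "complex \<Rightarrow> nat multiset \<Rightarrow> complex" where
  "pcoeff c p = prod_mset (image_mset (\<lambda>n. c / of_nat n) p)
                / (\<Prod>n\<in>set_mset p. of_nat (fact (count p n)))"

text \<open>z^(-s) coefficient of E^+(-a alpha, z) = exp(- sum_{n>0} a alpha(n)/n z^(-n))\<close>
definition Tpart :: "nat \<Rightarrow> int \<Rightarrow> nat \<Rightarrow> vec \<Rightarrow> vec" where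
  "Tpart k a s f = (\<Sum>p\<in>parts s. smul (pcoeff (- of_int a) p)
      (foldr (\<lambda>n g. heis k (int n) g) (sorted_list_of_multiset p) f))"

text \<open>z^r coefficient of E^-(-a alpha, z) = exp(sum_{n>0} a alpha(-n)/n z^n)\<close>
definition Spart :: "int \<Rightarrow> nat \<Rightarrow> vec \<Rightarrow> vec" where
  "Spart a r f = (\<Sum>p\<in>parts r. smul (pcoeff (of_int a) p)
      (lin (\<lambda>x. case x of (M, b) \<Rightarrow> single (M + p, b)) f))"

text \<open>modes of Y(e^(a alpha), z) = E^-(-a alpha,z) E^+(-a alpha,z) e_(a alpha) z^(a alpha):
  (e^(a alpha))_q is the coefficient of z^(-q-1)\<close>
definition emode_basis :: "nat \<Rightarrow> int \<Rightarrow> int \<Rightarrow> key \<Rightarrow> vec" where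
  "emode_basis k a q x = (case x of (M, b) \<Rightarrow>
     fsum (\<lambda>s. let r = int s - q - 1 - 2 * int k * a * b in
                 if r < 0 then 0 else Spart a (nat r) (Tpart k a s (single (M, a + b)))))"

definition emode :: "nat \<Rightarrow> int \<Rightarrow> int \<Rightarrow> vec \<Rightarrow> vec" where
  "emode k a q = lin (emode_basis k a q)"

text \<open>modes of Y(alpha(-n1)...alpha(-nr) e^(a alpha), z), via the iterate formula
  (alpha(-n)v)_q = sum_{i>=0} C(n+i-1,i) (alpha(-n-i) v_(q+i) - (-1)^n v_(q-n-i) alpha(i))\<close>
primrec Ylist :: "nat \<Rightarrow> nat list \<Rightarrow> int \<Rightarrow> int \<Rightarrow> vec \<Rightarrow> vec" where
  "Ylist k [] a q w = emode k a q w"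
| "Ylist k (n # ns) a q w =
     fsum (\<lambda>i. smul (of_nat ((n + i - 1) choose i))
        (heis k (- int n - int i) (Ylist k ns a (q + int i) w)
         - smul ((-1) ^ n) (Ylist k ns a (q - int n - int i) (heis k (int i) w))))"

definition mode :: "nat \<Rightarrow> vec \<Rightarrow> int \<Rightarrow> vec \<Rightarrow> vec" where
  "mode k v q w = (\<Sum>x\<in>supp v. smul (v x) (Ylist k (sorted_list_of_multiset (fst x)) (snd x) q w))"

definition VL :: "vec set" where
  "VL = {f. finite (supp f) \<and> (\<forall>x\<in>supp f. 0 \<notin># fst x)}"

definition theta :: "vec \<Rightarrow> vec" where
  "theta f = (\<lambda>(M, a). (-1) ^ size M * f (M, - a))"

definition VLplus :: "vec set" where
  "VLplus = {f \<in> VL. theta f = f}"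

definition vspan :: "vec set \<Rightarrow> vec set" where
  "vspan S = {x. \<exists>(n::nat) c g. (\<forall>i<n. g i \<in> S) \<and> x = (\<Sum>i<n. smul (c i) (g i))}"

definition C2 :: "nat \<Rightarrow> vec set \<Rightarrow> vec set" where
  "C2 k V = vspan {mode k v (-2) u | v u. v \<in> V \<and> u \<in> V}"

definition vac :: vec where "vac = single ({#}, 0)"

definition omega :: "nat \<Rightarrow> vec" where
  "omega k = smul (1 / (4 * of_nat k)) (heis k (-1) (heis k (-1) vac))"

definition Lop :: "nat \<Rightarrow> int \<Rightarrow> vec \<Rightarrow> vec" where
  "Lop k n = mode k (omega k) (n + 1)"

definition Evec :: vec where "Evec = single ({#}, 1) + single ({#}, -1)"

definition Jvec :: "nat \<Rightarrow> vec" where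
  "Jvec k = smul (1 / (4 * of_nat k ^ 2)) (heis k (-1) (heis k (-1) (heis k (-1) (heis k (-1) vac))))
          - smul (1 / of_nat k) (heis k (-3) (heis k (-1) vac))
          + smul (3 / (4 * of_nat k)) (heis k (-2) (heis k (-2) vac))"

end

theory Submission
  imports Defs
begin

text \<open>All vectors involved lie in the span of the theta-invariant vectors
  alpha(-n1)...alpha(-nr)(e^alpha + (-1)^r e^(-alpha)) (\<open>sym_vec [n1, ..., nr]\<close> below)
  for the partitions n1 + ... + nr = 4. Expressing J_(-1)E, L(-2)^2 E and the four elements
  (alpha(-1)alpha(-2)1)_(-2)E and v_(-2)1 of C_2(V_L^+), for v = alpha(-3)(e^alpha - e^(-alpha)),
  alpha(-1)alpha(-2)(e^alpha + e^(-alpha)), alpha(-1)^3(e^alpha - e^(-alpha)), in this basis,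
  J_(-1)E - beta L(-2)^2 E turns out to be a linear combination of the latter four.

  Vertex operators of e^(+-alpha)
  are only ever applied to the vacuum, in modes q >= -2, where (e^(a alpha))_(-1)1 = e^(a alpha)
  and (e^(a alpha))_(-2)1 = a alpha(-1)e^(a alpha). The modes of alpha(-n)v come from the
  iterate formula, whose infinite sum may be cut off: its summands are homogeneous of a degree
  that eventually becomes negative.\<close>

section \<open>Finitely supported vectors\<close>

text \<open>Induction over lists instantiates the induction predicate with vectors in
  eta-expanded form, which the simplifier turns into pointwise sums; these rules fold them back.\<close>

lemma vec_eta_simps [simp]:
  "(\<lambda>y. 0) = (0 :: vec)"
  "(\<lambda>y. f y + g y) = (f + g :: vec)"
  "(\<lambda>y. f y - g y) = (f - g :: vec)"
  by (simp_all add: fun_eq_iff)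

lemma smul_add: "smul c (f + g) = smul c f + smul c g"
  by (simp add: smul_def fun_eq_iff distrib_left)

lemma smul_add_left: "smul (a + b) f = smul a f + smul b f"
  by (simp add: smul_def fun_eq_iff distrib_right)

lemma smul_zero_right [simp]: "smul c 0 = 0"
  by (simp add: smul_def fun_eq_iff)

lemma smul_zero_left [simp]: "smul 0 f = 0"
  by (simp add: smul_def fun_eq_iff)

lemma smul_one [simp]: "smul 1 f = f"
  by (simp add: smul_def fun_eq_iff)

lemma smul_smul [simp]: "smul a (smul b f) = smul (a * b) f"
  by (simp add: smul_def fun_eq_iff)

lemma sum_apply: "sum f A y = (\<Sum>x\<in>A. f x y)"
  by (induction A rule: infinite_finite_induct) simp_all

lemma smul_sum: "smul c (sum f A) = (\<Sum>x\<in>A. smul c (f x))"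
  by (simp add: fun_eq_iff smul_def sum_apply sum_distrib_left)

lemma supp_add: "supp (f + g) \<subseteq> supp f \<union> supp g"
  by (auto simp: supp_def)

lemma supp_smul: "supp (smul c f) \<subseteq> supp f"
  by (auto simp: supp_def smul_def)

lemma supp_single [simp]: "supp (single x) = {x}"
  by (auto simp: supp_def single_def)

lemma supp_zero [simp]: "supp 0 = {}"
  by (auto simp: supp_def)

lemma lin_eq_sum_superset:
  assumes "finite S" "supp f \<subseteq> S"
  shows "lin T f = (\<Sum>x\<in>S. smul (f x) (T x))"
  unfolding lin_def by (rule sum.mono_neutral_left) (use assms in \<open>auto simp: supp_def\<close>)

lemma lin_add:
  assumes "finite (supp f)" "finite (supp g)"
  shows "lin T (f + g) = lin T f + lin T g"
proof -
  let ?S = "supp f \<union> supp g"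
  have "lin T (f + g) = (\<Sum>x\<in>?S. smul ((f + g) x) (T x))"
    using assms supp_add by (intro lin_eq_sum_superset) auto
  also have "\<dots> = (\<Sum>x\<in>?S. smul (f x) (T x)) + (\<Sum>x\<in>?S. smul (g x) (T x))"
    by (simp add: smul_add_left sum.distrib)
  also have "\<dots> = lin T f + lin T g"
    using assms by (simp add: lin_eq_sum_superset[of ?S f] lin_eq_sum_superset[of ?S g])
  finally show ?thesis .
qed

lemma lin_smul:
  assumes "finite (supp f)"
  shows "lin T (smul c f) = smul c (lin T f)"
proof -
  have "lin T (smul c f) = (\<Sum>x\<in>supp f. smul (smul c f x) (T x))"
    using assms supp_smul by (intro lin_eq_sum_superset) auto
  then show ?thesis
    by (simp add: lin_def smul_sum) (simp add: smul_def)
qed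

lemma lin_single [simp]: "lin T (single x) = T x"
  by (simp add: lin_def) (simp add: single_def)

lemma lin_zero [simp]: "lin T 0 = 0"
  by (simp add: lin_def)

lemma lin_single_id:
  assumes "finite (supp f)"
  shows "lin single f = f"
proof
  fix y
  have "lin single f y = (\<Sum>x\<in>supp f. if x = y then f y else 0)"
    by (auto simp: lin_def sum_apply smul_def single_def intro: sum.cong)
  also have "\<dots> = f y"
    using assms by (simp add: supp_def)
  finally show "lin single f y = f y" .
qed

lemma smul_in_vspan: "s \<in> S \<Longrightarrow> smul c s \<in> vspan S"
  unfolding vspan_def by (rule CollectI, rule exI[of _ 1]) auto

lemma vspan_add_smul:
  assumes "x \<in> vspan S" "s \<in> S"
  shows "x + smul c s \<in> vspan S"
proof -
  obtain n :: nat and d g where g: "\<forall>i<n. g i \<in> S" and x: "x = (\<Sum>i<n. smul (d i) (g i))"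
    using assms(1) unfolding vspan_def by blast
  have "x + smul c s = (\<Sum>i<Suc n. smul ((d(n := c)) i) ((g(n := s)) i))"
    by (simp add: x)
  moreover have "\<forall>i<Suc n. (g(n := s)) i \<in> S"
    using g assms(2) by (simp add: less_Suc_eq)
  ultimately show ?thesis
    unfolding vspan_def by blast
qed

section \<open>Monomial lists\<close>

text \<open>A monomial (c, [n1, ..., nr], a) stands for c alpha(-n1)...alpha(-nr) e^(a alpha), a list
  of monomials for their sum.\<close>

type_synonym mon = "complex \<times> nat list \<times> int"

fun mon_vec :: "mon \<Rightarrow> vec" where
  "mon_vec (c, ns, a) = smul c (single (mset ns, a))"

definition vec_of :: "mon list \<Rightarrow> vec" where
  "vec_of xs = sum_list (map mon_vec xs)"

lemma vec_of_Nil [simp]: "vec_of [] = 0"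
  by (simp add: vec_of_def)

lemma vec_of_Cons [simp]: "vec_of (x # xs) = mon_vec x + vec_of xs"
  by (simp add: vec_of_def)

lemma vec_of_append [simp]: "vec_of (xs @ ys) = vec_of xs + vec_of ys"
  by (simp add: vec_of_def)

lemma vec_of_concat: "vec_of (concat (map f xs)) = (\<Sum>x\<leftarrow>xs. vec_of (f x))"
  by (induction xs) simp_all

lemma finite_supp_mon_vec: "finite (supp (mon_vec x))"
  by (cases x) (auto intro: finite_subset[OF supp_smul])

lemma finite_supp_vec_of: "finite (supp (vec_of xs))"
  by (induction xs) (auto intro: finite_subset[OF supp_add] finite_supp_mon_vec)

lemma lin_vec_of: "lin T (vec_of xs) = (\<Sum>(c, ns, a)\<leftarrow>xs. smul c (T (mset ns, a)))"
proof (induction xs)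
  case (Cons x xs)
  have "lin T (mon_vec x) = (case x of (c, ns, a) \<Rightarrow> smul c (T (mset ns, a)))"
    by (cases x) (simp add: lin_smul)
  with Cons show ?case
    by (simp add: lin_add finite_supp_mon_vec finite_supp_vec_of)
qed simp

definition scale_mons :: "complex \<Rightarrow> mon list \<Rightarrow> mon list" where
  "scale_mons c xs = map (\<lambda>(d, m). (c * d, m)) xs"

lemma scale_mons_simps [simp]:
  "scale_mons c [] = []"
  "scale_mons c ((d, m) # xs) = (c * d, m) # scale_mons c xs"
  by (simp_all add: scale_mons_def)

lemma vec_of_scale_mons: "vec_of (scale_mons c xs) = smul c (vec_of xs)"
proof (induction xs)
  case (Cons x xs)
  then show ?case
    by (cases x) (simp add: smul_add)
qed simp

lemma smul_vec_of: "smul c (vec_of xs) = vec_of (scale_mons c xs)"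
  by (simp add: vec_of_scale_mons)

lemma add_vec_of: "vec_of xs + vec_of ys = vec_of (xs @ ys)"
  by simp

lemma diff_vec_of: "vec_of xs - vec_of ys = vec_of (xs @ scale_mons (-1) ys)"
  by (simp add: vec_of_scale_mons smul_def fun_eq_iff)

fun insert_mon :: "mon \<Rightarrow> mon list \<Rightarrow> mon list" where
  "insert_mon x [] = [x]"
| "insert_mon x (y # ys) =
     (if snd x = snd y then (fst x + fst y, snd y) # ys else y # insert_mon x ys)"

definition collect_mons :: "mon list \<Rightarrow> mon list" where
  "collect_mons xs = foldr insert_mon xs []"

lemma collect_mons_simps:
  "collect_mons [] = []"
  "collect_mons (x # xs) = insert_mon x (collect_mons xs)"
  by (simp_all add: collect_mons_def)

lemma mon_vec_add: "snd x = snd y \<Longrightarrow> mon_vec (fst x + fst y, snd y) = mon_vec x + mon_vec y"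
  by (cases x; cases y) (simp add: smul_add_left)

lemma vec_of_insert_mon: "vec_of (insert_mon x ys) = mon_vec x + vec_of ys"
proof (induction ys)
  case (Cons y ys)
  then show ?case
    by (cases "snd x = snd y") (simp_all add: mon_vec_add add_ac)
qed simp

lemma vec_of_collect_mons: "vec_of (collect_mons xs) = vec_of xs"
  by (induction xs) (simp_all add: collect_mons_simps vec_of_insert_mon)

lemma vec_of_zero_coeffs: "\<forall>x\<in>set xs. fst x = 0 \<Longrightarrow> vec_of xs = 0"
proof (induction xs)
  case (Cons x xs)
  then show ?case
    by (cases x) simp
qed simp

lemma vec_of_eqI:
  assumes "\<forall>x\<in>set (collect_mons (xs @ scale_mons (-1) ys)). fst x = 0"
  shows "vec_of xs = vec_of ys"
proof -
  have "vec_of xs - vec_of ys = 0"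
    using vec_of_zero_coeffs[OF assms] by (simp add: vec_of_collect_mons diff_vec_of)
  then show ?thesis
    by simp
qed

fun heis_mon :: "nat \<Rightarrow> int \<Rightarrow> mon \<Rightarrow> mon list" where
  "heis_mon k m (c, ns, a) =
     (if m < 0 then [(c, insort (nat (- m)) ns, a)]
      else if m = 0 then (if a = 0 then [] else [(c * of_int (2 * int k * a), ns, a)])
      else if count_list ns (nat m) = 0 then []
      else [(c * of_int (2 * int k * m * int (count_list ns (nat m))), remove1 (nat m) ns, a)])"

definition heis_mons :: "nat \<Rightarrow> int \<Rightarrow> mon list \<Rightarrow> mon list" where
  "heis_mons k m xs = concat (map (heis_mon k m) xs)"

lemma heis_mons_simps [simp]:
  "heis_mons k m [] = []"
  "heis_mons k m (x # xs) = heis_mon k m x @ heis_mons k m xs"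
  by (simp_all add: heis_mons_def)

lemma heis_vec_of: "heis k m (vec_of xs) = vec_of (heis_mons k m xs)"
proof -
  have "smul c (heis_basis k m (mset ns, a)) = vec_of (heis_mon k m (c, ns, a))" for c ns a
    by (auto simp: heis_basis_def count_mset)
  then have "(\<lambda>(c, ns, a). smul c (heis_basis k m (mset ns, a))) = (\<lambda>x. vec_of (heis_mon k m x))"
    by (simp add: fun_eq_iff del: heis_mon.simps)
  then show ?thesis
    by (simp only: heis_def lin_vec_of heis_mons_def vec_of_concat)
qed

section \<open>Vertex operators on monomial lists\<close>

lemma positive_mset_sum_0: "\<forall>n\<in>#p. 0 < (n :: nat) \<Longrightarrow> sum_mset p = 0 \<Longrightarrow> p = {#}"
  by (metis less_not_refl multiset_nonemptyE sum_mset_0_iff)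

lemma parts_0: "parts 0 = {{#}}"
  by (auto simp: parts_def positive_mset_sum_0)

lemma parts_nonempty: "p \<in> parts s \<Longrightarrow> 0 < s \<Longrightarrow> p \<noteq> {#}"
  by (auto simp: parts_def)

lemma parts_1: "parts 1 = {{#1#}}"
proof
  show "parts 1 \<subseteq> {{#1#}}"
  proof
    fix p assume p: "p \<in> parts 1"
    then obtain x p' where p_eq: "p = add_mset x p'"
      using parts_nonempty by (metis multiset_cases zero_less_one)
    with p have "0 < x" "\<forall>n\<in>#p'. 0 < n" "x + sum_mset p' = 1"
      by (auto simp: parts_def)
    then have "x = 1" "p' = {#}"
      using positive_mset_sum_0[of p'] by (simp_all del: sum_mset_0_iff)
    with p_eq show "p \<in> {{#1#}}"
      by simp
  qed
qed (auto simp: parts_def)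

lemma pcoeff_empty [simp]: "pcoeff c {#} = 1"
  by (simp add: pcoeff_def)

lemma pcoeff_single_1: "pcoeff c {#Suc 0#} = c"
  by (simp add: pcoeff_def)

lemma pcoeff_zero: "p \<noteq> {#} \<Longrightarrow> pcoeff 0 p = 0"
  by (cases p) (auto simp: pcoeff_def)

lemma heis_pos_iterate_vacuum:
  assumes "\<forall>n\<in>set ns. 0 < n" "ns \<noteq> []"
  shows "foldr (\<lambda>n g. heis k (int n) g) ns (single ({#}, a)) = 0"
  using assms
proof (induction ns)
  case (Cons n ns)
  then show ?case
    by (cases "ns = []") (simp_all add: heis_def heis_basis_def)
qed simp

lemma Tpart_charge_0: "Tpart k 0 s f = (if s = 0 then f else 0)"
  by (auto simp: Tpart_def parts_0 pcoeff_zero parts_nonempty intro: sum.neutral)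

lemma Tpart_vacuum: "Tpart k a s (single ({#}, a)) = (if s = 0 then single ({#}, a) else 0)"
proof (cases "s = 0")
  case False
  have "foldr (\<lambda>n g. heis k (int n) g) (sorted_list_of_multiset p) (single ({#}, a)) = 0"
    if "p \<in> parts s" for p
    using that False parts_nonempty[OF that]
    by (intro heis_pos_iterate_vacuum)
      (auto simp: parts_def dest: arg_cong[of _ _ mset])
  with False show ?thesis
    by (simp add: Tpart_def)
qed (simp add: Tpart_def parts_0)

lemma Spart_zero [simp]: "Spart a r 0 = 0"
  by (simp add: Spart_def)

lemma Spart_0:
  assumes "finite (supp f)"
  shows "Spart a 0 f = f"
proof -
  have "(\<lambda>(M, b). single (M, b)) = single"
    by (simp add: fun_eq_iff)
  with assms show ?thesis
    by (simp add: Spart_def parts_0 lin_single_id)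
qed

lemma Spart_charge_0:
  assumes "finite (supp f)"
  shows "Spart 0 r f = (if r = 0 then f else 0)"
proof (cases "r = 0")
  case False
  then show ?thesis
    by (auto simp: Spart_def pcoeff_zero parts_nonempty intro: sum.neutral)
qed (simp add: Spart_0 assms)

lemma Spart_1_single:
  "Spart a (Suc 0) (single (M, b)) = smul (of_int a) (single (add_mset (Suc 0) M, b))"
  unfolding Spart_def One_nat_def[symmetric] parts_1 by (simp add: pcoeff_single_1)

lemma fsum_eq_single: "(\<And>i. i \<noteq> j \<Longrightarrow> g i = 0) \<Longrightarrow> fsum g = g j"
  unfolding fsum_def by (subst sum.mono_neutral_left[of "{j}"]) auto

lemma fsum_eq_sum_lessThan: "(\<And>i. N \<le> i \<Longrightarrow> g i = 0) \<Longrightarrow> fsum g = (\<Sum>i<N. g i)"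
  unfolding fsum_def by (rule sum.mono_neutral_left) (auto simp: not_less[symmetric])

lemma emode_charge_0:
  assumes "finite (supp f)"
  shows "emode k 0 q f = (if q = -1 then f else 0)"
proof -
  have "emode_basis k 0 q (M, b) = (if q = -1 then single (M, b) else 0)" for M b
  proof -
    let ?g = "\<lambda>s. let r = int s - q - 1 - 2 * int k * 0 * b in
      if r < 0 then 0 else Spart 0 (nat r) (Tpart k 0 s (single (M, 0 + b)))"
    have "emode_basis k 0 q (M, b) = ?g 0"
      unfolding emode_basis_def prod.case by (rule fsum_eq_single) (simp add: Tpart_charge_0 Let_def)
    then show ?thesis
      by (simp add: Tpart_charge_0 Spart_charge_0 Let_def)
  qed
  then have "emode_basis k 0 q = (if q = -1 then single else (\<lambda>x. 0))"
    by (auto simp: fun_eq_iff)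
  with assms show ?thesis
    by (simp add: emode_def lin_single_id) (simp add: lin_def)
qed

lemma emode_basis_vacuum:
  assumes "-2 \<le> q"
  shows "emode_basis k a q ({#}, 0) =
    (if q = -1 then single ({#}, a)
     else if q = -2 then smul (of_int a) (single ({#1#}, a)) else 0)"
proof -
  let ?g = "\<lambda>s. let r = int s - q - 1 - 2 * int k * a * 0 in
    if r < 0 then 0 else Spart a (nat r) (Tpart k a s (single ({#}, a + 0)))"
  have "emode_basis k a q ({#}, 0) = ?g 0"
    unfolding emode_basis_def prod.case by (rule fsum_eq_single) (simp add: Tpart_vacuum Let_def)
  moreover have "q = -1 \<or> q = -2 \<or> 0 \<le> q"
    using assms by linarith
  ultimately show ?thesis
    by (auto simp: Tpart_vacuum Spart_0 Spart_1_single Let_def)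
qed

text \<open>For \<open>a \<noteq> 0\<close> the monomial itself is ignored: this is only correct on multiples of
  the vacuum and for \<open>q \<ge> -2\<close>, the situation described by \<open>emode_exact\<close>.\<close>

fun emode_mon :: "int \<Rightarrow> int \<Rightarrow> mon \<Rightarrow> mon list" where
  "emode_mon a q (c, ns, b) =
     (if a = 0 then (if q = -1 then [(c, ns, b)] else [])
      else if q = -1 then [(c, [], a)]
      else if q = -2 then [(c * of_int a, [1], a)] else [])"

definition emode_mons :: "int \<Rightarrow> int \<Rightarrow> mon list \<Rightarrow> mon list" where
  "emode_mons a q xs = concat (map (emode_mon a q) xs)"

lemma emode_mons_simps:
  "emode_mons a q [] = []"
  "emode_mons a q (x # xs) = emode_mon a q x @ emode_mons a q xs"
  by (simp_all add: emode_mons_def)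

definition emode_exact :: "int \<Rightarrow> int \<Rightarrow> mon list \<Rightarrow> bool" where
  "emode_exact a q xs \<longleftrightarrow> a = 0 \<or> (\<forall>x\<in>set xs. snd x = ([], 0) \<and> -2 \<le> q)"

lemma emode_exact_mono: "emode_exact a q xs \<Longrightarrow> q \<le> q' \<Longrightarrow> emode_exact a q' xs"
  by (auto simp: emode_exact_def)

lemma emode_mons_charge_0: "emode_mons 0 q xs = (if q = -1 then xs else [])"
  by (induction xs) (auto simp: emode_mons_def)

lemma emode_vec_of:
  assumes "emode_exact a q xs"
  shows "emode k a q (vec_of xs) = vec_of (emode_mons a q xs)"
proof (cases "a = 0")
  case True
  then show ?thesis
    by (simp add: emode_charge_0 finite_supp_vec_of emode_mons_charge_0)
next
  case False
  with assms have vacuum: "\<forall>x\<in>set xs. snd x = ([], 0) \<and> -2 \<le> q"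
    by (auto simp: emode_exact_def)
  have "(\<Sum>(c, ns, b)\<leftarrow>xs. smul c (emode_basis k a q (mset ns, b))) =
    (\<Sum>x\<leftarrow>xs. vec_of (emode_mon a q x))"
    using vacuum by (intro arg_cong[where f = sum_list] map_cong)
      (auto simp: emode_basis_vacuum False)
  then show ?thesis
    by (simp add: emode_def lin_vec_of emode_mons_def vec_of_concat)
qed

definition homogeneous :: "int \<Rightarrow> mon list \<Rightarrow> bool" where
  "homogeneous d xs \<longleftrightarrow> (\<forall>x\<in>set xs. int (sum_list (fst (snd x))) = d)"

lemma homogeneous_simps [simp]:
  "homogeneous d []"
  "homogeneous d ((c, ns, a) # xs) \<longleftrightarrow> int (sum_list ns) = d \<and> homogeneous d xs"
  "homogeneous d (xs @ ys) \<longleftrightarrow> homogeneous d xs \<and> homogeneous d ys"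
  "homogeneous d (scale_mons c xs) \<longleftrightarrow> homogeneous d xs"
  by (auto simp: homogeneous_def scale_mons_def)

lemma homogeneous_concat:
  "(\<And>x. x \<in> set xs \<Longrightarrow> homogeneous d (f x)) \<Longrightarrow> homogeneous d (concat (map f xs))"
  by (auto simp: homogeneous_def)

lemma homogeneous_negative: "homogeneous d xs \<Longrightarrow> d < 0 \<Longrightarrow> xs = []"
  by (cases xs) (auto simp: homogeneous_def)

lemma sum_list_insort: "sum_list (insort n ns) = n + sum_list (ns :: nat list)"
  by (metis mset_insort sum_mset.add_mset sum_mset_sum_list)

lemma sum_list_remove1: "n \<in> set ns \<Longrightarrow> sum_list (remove1 n ns) + n = sum_list (ns :: nat list)"
  by (induction ns) auto

lemma homogeneous_heis_mon:
  assumes "int (sum_list ns) = d"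
  shows "homogeneous (d - m) (heis_mon k m (c, ns, a))"
proof -
  have "sum_list (remove1 (nat m) ns) + nat m = sum_list ns" if "count_list ns (nat m) \<noteq> 0"
    using that by (intro sum_list_remove1) (simp add: count_list_0_iff)
  with assms show ?thesis
    by (auto simp: sum_list_insort)
qed

lemma homogeneous_heis_mons: "homogeneous d xs \<Longrightarrow> homogeneous (d - m) (heis_mons k m xs)"
proof (induction xs)
  case (Cons x xs)
  then show ?case
    by (cases x) (simp add: homogeneous_heis_mon del: heis_mon.simps)
qed simp

lemma emode_exact_heis_mons_nonneg:
  assumes "emode_exact a q xs"
  shows "emode_exact a q' (heis_mons k (int i) xs)"
proof (cases "a = 0")
  case False
  with assms have "\<forall>x\<in>set xs. snd x = ([], 0)"
    by (simp add: emode_exact_def)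
  then have "heis_mons k (int i) xs = []"
    by (induction xs) auto
  then show ?thesis
    by (simp add: emode_exact_def)
qed (simp add: emode_exact_def)

lemma homogeneous_emode_mons:
  "homogeneous d xs \<Longrightarrow> emode_exact a q xs \<Longrightarrow> homogeneous (d - q - 1) (emode_mons a q xs)"
  by (induction xs) (auto simp: emode_mons_simps emode_exact_def)

text \<open>\<open>Ylist\<close> with the sum over \<open>i\<close> cut off at \<open>N\<close>; the test for the empty list
  only saves work.\<close>

primrec Y_mons :: "nat \<Rightarrow> nat \<Rightarrow> int \<Rightarrow> nat list \<Rightarrow> int \<Rightarrow> mon list \<Rightarrow> mon list" where
  "Y_mons k N a [] q xs = emode_mons a q xs"
| "Y_mons k N a (n # ns) q xs = (if xs = [] then [] else concat (map (\<lambda>i.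
      scale_mons (of_nat ((n + i - 1) choose i))
        (heis_mons k (- int n - int i) (Y_mons k N a ns (q + int i) xs)
         @ scale_mons (- ((-1) ^ n)) (Y_mons k N a ns (q - int n - int i) (heis_mons k (int i) xs))))
      [0..<N]))"

lemma Y_mons_Nil [simp]: "Y_mons k N a ns q [] = []"
  by (cases ns) (simp_all add: emode_mons_simps)

lemma homogeneous_Y_mons:
  "homogeneous d xs \<Longrightarrow> emode_exact a q xs \<Longrightarrow>
    homogeneous (d + int (sum_list ns) - q - 1) (Y_mons k N a ns q xs)"
proof (induction ns arbitrary: d q xs)
  case Nil
  then show ?case
    by (simp add: homogeneous_emode_mons)
next
  case (Cons n ns)
  have "homogeneous (d + int (sum_list (n # ns)) - q - 1)
      (heis_mons k (- int n - int i) (Y_mons k N a ns (q + int i) xs))" for i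
  proof -
    have "homogeneous (d + int (sum_list ns) - (q + int i) - 1) (Y_mons k N a ns (q + int i) xs)"
      using Cons.prems emode_exact_mono by (intro Cons.IH) auto
    from homogeneous_heis_mons[OF this, of "- int n - int i" k] show ?thesis
      by (simp add: algebra_simps)
  qed
  moreover have "homogeneous (d + int (sum_list (n # ns)) - q - 1)
      (Y_mons k N a ns (q - int n - int i) (heis_mons k (int i) xs))" for i
  proof -
    have "homogeneous ((d - int i) + int (sum_list ns) - (q - int n - int i) - 1)
        (Y_mons k N a ns (q - int n - int i) (heis_mons k (int i) xs))"
      using Cons.prems by (intro Cons.IH homogeneous_heis_mons emode_exact_heis_mons_nonneg)
    then show ?thesis
      by (simp add: algebra_simps)
  qed
  ultimately show ?case
    by (simp add: homogeneous_concat)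
qed

lemma Ylist_vec_of_Y_mons:
  assumes "homogeneous d xs" "emode_exact a q xs" "d + 1 \<le> int N" "d + int (sum_list ns) - q \<le> int N"
  shows "Ylist k ns a q (vec_of xs) = vec_of (Y_mons k N a ns q xs)"
  using assms
proof (induction ns arbitrary: d q xs)
  case Nil
  then show ?case
    by (simp add: emode_vec_of)
next
  case (Cons n ns)
  let ?H = "\<lambda>i. scale_mons (of_nat ((n + i - 1) choose i))
    (heis_mons k (- int n - int i) (Y_mons k N a ns (q + int i) xs)
     @ scale_mons (- ((-1) ^ n)) (Y_mons k N a ns (q - int n - int i) (heis_mons k (int i) xs)))"
  have summand: "smul (of_nat ((n + i - 1) choose i))
      (heis k (- int n - int i) (Ylist k ns a (q + int i) (vec_of xs))
       - smul ((-1) ^ n) (Ylist k ns a (q - int n - int i) (heis k (int i) (vec_of xs))))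
    = vec_of (?H i)" for i
  proof -
    have "Ylist k ns a (q + int i) (vec_of xs) = vec_of (Y_mons k N a ns (q + int i) xs)"
      using Cons.prems emode_exact_mono by (intro Cons.IH[of d]) auto
    moreover have "Ylist k ns a (q - int n - int i) (vec_of (heis_mons k (int i) xs)) =
        vec_of (Y_mons k N a ns (q - int n - int i) (heis_mons k (int i) xs))"
      using Cons.prems
      by (intro Cons.IH[of "d - int i"] homogeneous_heis_mons emode_exact_heis_mons_nonneg) auto
    ultimately show ?thesis
      by (simp add: heis_vec_of vec_of_scale_mons) (simp add: smul_def fun_eq_iff)
  qed
  have vanishing: "?H i = []" if "N \<le> i" for i
  proof -
    have "d < int i" "d + int (sum_list ns) - (q + int i) - 1 < 0"
      using Cons.prems(3,4) of_nat_mono[OF that] by simp_all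
    have "homogeneous (d + int (sum_list ns) - (q + int i) - 1) (Y_mons k N a ns (q + int i) xs)"
      using Cons.prems emode_exact_mono by (intro homogeneous_Y_mons) auto
    then have "Y_mons k N a ns (q + int i) xs = []"
      by (rule homogeneous_negative) fact
    moreover have "heis_mons k (int i) xs = []"
      using homogeneous_negative[OF homogeneous_heis_mons[OF Cons.prems(1)]] \<open>d < int i\<close> by simp
    ultimately show ?thesis
      by simp
  qed
  have "Ylist k (n # ns) a q (vec_of xs) = fsum (\<lambda>i. vec_of (?H i))"
    by (simp only: Ylist.simps summand)
  also have "\<dots> = (\<Sum>i<N. vec_of (?H i))"
    by (rule fsum_eq_sum_lessThan) (simp only: vanishing vec_of_Nil)
  also have "\<dots> = vec_of (Y_mons k N a (n # ns) q xs)"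
    by (simp add: vec_of_concat interv_sum_list_conv_sum_set_nat atLeast0LessThan)
  finally show ?case .
qed

definition hd_degree :: "mon list \<Rightarrow> int" where
  "hd_degree xs = (case xs of [] \<Rightarrow> 0 | x # _ \<Rightarrow> int (sum_list (fst (snd x))))"

lemma Ylist_vec_of:
  assumes "homogeneous (hd_degree xs) xs" "emode_exact a q xs"
  shows "Ylist k ns a q (vec_of xs) =
    vec_of (Y_mons k (nat (max (hd_degree xs + 1) (hd_degree xs + int (sum_list ns) - q))) a ns q xs)"
proof -
  have "0 \<le> hd_degree xs"
    by (simp add: hd_degree_def split: list.split)
  with assms show ?thesis
    by (intro Ylist_vec_of_Y_mons) auto
qed

lemma mode_vec_of: "mode k (vec_of vs) q w = (\<Sum>(c, ns, a)\<leftarrow>vs. smul c (Ylist k (sort ns) a q w))"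
proof -
  have "mode k v q w = lin (\<lambda>(M, a). Ylist k (sorted_list_of_multiset M) a q w) v" for v
    by (simp add: mode_def lin_def case_prod_beta)
  then show ?thesis
    by (simp add: lin_vec_of)
qed

lemma theta_add: "theta (f + g) = theta f + theta g"
  by (auto simp: theta_def fun_eq_iff distrib_left)

lemma theta_smul: "theta (smul c f) = smul c (theta f)"
  by (auto simp: theta_def fun_eq_iff smul_def)

lemma theta_single: "theta (single (M, a)) = smul ((-1) ^ size M) (single (M, - a))"
  by (auto simp: theta_def fun_eq_iff smul_def single_def)

definition sym_vec :: "nat list \<Rightarrow> vec" where
  "sym_vec ns = single (mset ns, 1) + smul ((-1) ^ length ns) (single (mset ns, -1))"

lemma sym_vec_in_VLplus:
  assumes "0 \<notin> set ns"
  shows "sym_vec ns \<in> VLplus"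
proof -
  have "supp (sym_vec ns) \<subseteq> {(mset ns, 1), (mset ns, -1)}"
    unfolding sym_vec_def using supp_add supp_smul by fastforce
  then have "sym_vec ns \<in> VL"
    using assms by (auto simp: VL_def intro: finite_subset)
  moreover have "theta (sym_vec ns) = sym_vec ns"
    by (simp add: sym_vec_def theta_add theta_smul theta_single add.commute)
  ultimately show ?thesis
    by (simp add: VLplus_def)
qed

lemma single_in_VLplus:
  assumes "0 \<notin># M" "even (size M)"
  shows "single (M, 0) \<in> VLplus"
  using assms by (simp add: VLplus_def VL_def theta_single)

lemma Evec_eq_sym_vec: "Evec = sym_vec []"
  by (simp add: Evec_def sym_vec_def)

lemma vac_vec_of: "vac = vec_of [(1, [], 0)]"
  by (simp add: vac_def)

lemma sym_vec_vec_of: "sym_vec ns = vec_of [(1, ns, 1), ((-1) ^ length ns, ns, -1)]"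
  by (simp add: sym_vec_def)

lemmas mode_eval_simps = Lop_def omega_def vac_vec_of sym_vec_vec_of heis_vec_of smul_vec_of
  add_vec_of diff_vec_of mode_vec_of Ylist_vec_of emode_mons_simps emode_exact_def hd_degree_def
  upt_rec

lemma mode_Jvec_Evec:
  assumes "0 < k"
  shows "mode k (Jvec k) (-1) Evec =
    smul (8 * of_nat k - 17) (sym_vec [4]) + smul (6 + 3 / (4 * of_nat k)) (sym_vec [2, 2])
    + smul (12 - 1 / of_nat k) (sym_vec [1, 3]) + smul (6 / of_nat k) (sym_vec [1, 1, 2])
    + smul (1 / (4 * of_nat k ^ 2)) (sym_vec [1, 1, 1, 1])"
  using assms unfolding Jvec_def Evec_eq_sym_vec
  by (simp add: mode_eval_simps del: Ylist.simps vec_of_Cons)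
    (rule vec_of_eqI, simp add: collect_mons_simps field_simps power2_eq_square)

lemma Lop_Lop_Evec:
  assumes "0 < k"
  shows "Lop k (-2) (Lop k (-2) Evec) =
    smul 2 (sym_vec [4]) + sym_vec [2, 2]
    + smul (1 / (2 * of_nat k)) (sym_vec [1, 3]) + smul (1 / (2 * of_nat k)) (sym_vec [1, 1, 2])
    + smul (1 / (16 * of_nat k ^ 2)) (sym_vec [1, 1, 1, 1])"
  using assms unfolding Evec_eq_sym_vec
  by (simp add: mode_eval_simps del: Ylist.simps vec_of_Cons)
    (rule vec_of_eqI, simp add: collect_mons_simps field_simps power2_eq_square)

lemma mode_alpha12_Evec:
  "mode k (heis k (-1) (heis k (-2) vac)) (-2) Evec =
    smul (4 * of_nat k) (sym_vec [4]) + sym_vec [2, 2] + smul 2 (sym_vec [1, 3])"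
  unfolding Evec_eq_sym_vec
  by (simp add: mode_eval_simps del: Ylist.simps vec_of_Cons)
    (rule vec_of_eqI, simp add: collect_mons_simps field_simps power2_eq_square)

lemma mode_sym_vec_3_vac: "mode k (sym_vec [3]) (-2) vac = smul 3 (sym_vec [4]) + sym_vec [1, 3]"
  by (simp add: mode_eval_simps del: Ylist.simps vec_of_Cons)
    (rule vec_of_eqI, simp add: collect_mons_simps field_simps power2_eq_square)

lemma mode_sym_vec_12_vac:
  "mode k (sym_vec [1, 2]) (-2) vac = sym_vec [2, 2] + smul 2 (sym_vec [1, 3]) + sym_vec [1, 1, 2]"
  by (simp add: mode_eval_simps del: Ylist.simps vec_of_Cons)
    (rule vec_of_eqI, simp add: collect_mons_simps field_simps power2_eq_square)

lemma mode_sym_vec_111_vac: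
  "mode k (sym_vec [1, 1, 1]) (-2) vac = smul 3 (sym_vec [1, 1, 2]) + sym_vec [1, 1, 1, 1]"
  by (simp add: mode_eval_simps del: Ylist.simps vec_of_Cons)
    (rule vec_of_eqI, simp add: collect_mons_simps field_simps power2_eq_square)

lemma denominator_nonzero: "(4 * of_nat k - 1) * (4 * of_nat k - 9) \<noteq> (0 :: complex)"
proof -
  have "(of_nat (4 * k) :: complex) \<noteq> of_nat 1" "(of_nat (4 * k) :: complex) \<noteq> of_nat 9"
    unfolding of_nat_eq_iff by presburger+
  then show ?thesis
    by simp
qed

lemma Jvec_Evec_decomposition:
  assumes "0 < k"
  defines "B \<equiv> (4 * of_nat k - 1) * (4 * of_nat k - 9)"
  shows "mode k (Jvec k) (-1) Evec
      - smul ((64 * of_nat k ^ 2 - 16 * of_nat k - 18) / B) (Lop k (-2) (Lop k (-2) Evec)) =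
    smul ((81/8 - 333/4 * of_nat k + 274 * of_nat k ^ 2 - 276 * of_nat k ^ 3 + 32 * of_nat k ^ 4)
        / (of_nat k ^ 2 * B)) (mode k (heis k (-1) (heis k (-2) vac)) (-2) Evec)
    + smul ((- 27/2 * of_nat k + 72 * of_nat k ^ 2 - 104 * of_nat k ^ 3 + 128 * of_nat k ^ 4)
        / (of_nat k ^ 2 * B)) (mode k (sym_vec [3]) (-2) vac)
    + smul ((- 81/8 + 90 * of_nat k - 232 * of_nat k ^ 2 + 64 * of_nat k ^ 3)
        / (of_nat k ^ 2 * B)) (mode k (sym_vec [1, 2]) (-2) vac)
    + smul ((27/8 - 9 * of_nat k) / (of_nat k ^ 2 * B)) (mode k (sym_vec [1, 1, 1]) (-2) vac)"
proof -
  have "(of_nat k :: complex) \<noteq> 0" "B \<noteq> 0"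
    using assms denominator_nonzero by simp_all
  then show ?thesis
    unfolding mode_Jvec_Evec[OF assms(1)] Lop_Lop_Evec[OF assms(1)] mode_alpha12_Evec
      mode_sym_vec_3_vac mode_sym_vec_12_vac mode_sym_vec_111_vac
    by (simp add: fun_eq_iff smul_def, simp add: field_simps, simp add: B_def, algebra)
qed

theorem corollary5p2:
  fixes k :: nat
  assumes "3 \<le> k"
  shows "mode k (Jvec k) (-1) Evec
           - smul ((64 * of_nat k ^ 2 - 16 * of_nat k - 18) / ((4 * of_nat k - 1) * (4 * of_nat k - 9)))
                  (Lop k (-2) (Lop k (-2) Evec))
         \<in> C2 k VLplus"
proof -
  let ?S = "{mode k v (-2) u | v u. v \<in> VLplus \<and> u \<in> VLplus}"
  have "vac \<in> VLplus" "heis k (-1) (heis k (-2) vac) \<in> VLplus"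
    by (simp_all add: vac_def heis_def heis_basis_def single_in_VLplus)
  moreover have "Evec \<in> VLplus" "sym_vec [3] \<in> VLplus" "sym_vec [1, 2] \<in> VLplus"
      "sym_vec [1, 1, 1] \<in> VLplus"
    by (simp_all add: Evec_eq_sym_vec sym_vec_in_VLplus)
  ultimately have "mode k (heis k (-1) (heis k (-2) vac)) (-2) Evec \<in> ?S"
      "mode k (sym_vec [3]) (-2) vac \<in> ?S" "mode k (sym_vec [1, 2]) (-2) vac \<in> ?S"
      "mode k (sym_vec [1, 1, 1]) (-2) vac \<in> ?S"
    by blast+
  then show ?thesis
    using assms unfolding C2_def
    by (simp add: Jvec_Evec_decomposition smul_in_vspan vspan_add_smul)
qed

end
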